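(* Let $(A_n(x))_{n\ge0}$ be the Appell sequence of a complex sequence $(\alpha_n)_{n\ge0}$. The following are equivalent: (i) (R): $A_n(1-x)=(-1)^nA_n(x)$ for all $n\ge0$; (ii) $A_n(1)=(-1)^n\alpha_n$ for all $n\ge0$; (iii) $A_n(\tfrac12)=0$ for all odd $n\ge1$. Moreover, (R) is equivalent to: $A^\star_n(1)=(-1)^n\alpha_n$ for all $n\ge0$ together with $A^\star_n(2)=0$ for all odd $n\ge1$. Finally, (R) implies $\alpha_1=-\tfrac12\alpha_0$.
   Context: Let $(\alpha_n)_{n\ge0}$ be an arbitrary sequence of complex numbers (no assumption $\alpha_0\ne0$). Its Appell polynomials are $A_n(x)=\sum_{\nu=0}^{n}\binom{n}{\nu}\alpha_{n-\nu}x^\nu$ for $n\ge0$, equivalently $\big(\sum_{n\ge0}\alpha_n t^n/n!\big)e^{xt}=\sum_{n\ge0}A_n(x)t^n/n!$. The reciprocal Appell polynomials are $A^\star_n(x)=x^nA_n(x^{-1})=\sum_{\nu=0}^{n}\binom{n}{\nu}\alpha_\nu x^\nu$. *)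

theory Defs
  imports Complex_Main
begin

definition appell :: "(nat \<Rightarrow> complex) \<Rightarrow> nat \<Rightarrow> complex \<Rightarrow> complex" where
  "appell \<alpha> n x = (\<Sum>\<nu>=0..n. of_nat (n choose \<nu>) * \<alpha> (n - \<nu>) * x ^ \<nu>)"

definition appell_star :: "(nat \<Rightarrow> complex) \<Rightarrow> nat \<Rightarrow> complex \<Rightarrow> complex" where
  "appell_star \<alpha> n x = (\<Sum>\<nu>=0..n. of_nat (n choose \<nu>) * \<alpha> \<nu> * x ^ \<nu>)"

definition prop_R :: "(nat \<Rightarrow> complex) \<Rightarrow> bool" where
  "prop_R \<alpha> \<longleftrightarrow> (\<forall>n x. appell \<alpha> n (1 - x) = (-1) ^ n * appell \<alpha> n x)"

end

theory Submission
  imports Defs "HOL-Computational_Algebra.Formal_Power_Series"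
begin

(* The generating function identity a(t) e^{xt} = \<Sum> A_n(x) t^n/n! gives the addition theorem
   A_n(x + y) = \<Sum>_k C(n,k) y^k A_{n-k}(x). With x = 1, y = -x it shows that the reflection
   property only needs to be checked at x = 0, i.e. A_n(1) = (-1)^n \<alpha>_n. Expanding A_n(1) and
   A_n(0) around 1/2 shows that this in turn follows from the vanishing of the odd A_n(1/2).
   The reciprocal polynomials satisfy A*_n(x) = x^n A_n(1/x), which translates the conditions
   at 1 and 1/2 into conditions at 1 and 2. *)

lemma appell_eq_fps_nth:
  "fps_nth (fps_exp x * Abs_fps (\<lambda>n. \<alpha> n / fact n)) n = appell \<alpha> n x / fact n"
proof -
  have "fps_nth (fps_exp x * Abs_fps (\<lambda>n. \<alpha> n / fact n)) n
      = (\<Sum>i=0..n. x^i / fact i * (\<alpha> (n-i) / fact (n-i)))"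
    by (simp add: fps_mult_nth)
  also have "\<dots> = (\<Sum>i=0..n. of_nat (n choose i) * \<alpha> (n - i) * x ^ i / fact n)"
    by (intro sum.cong) (auto simp: binomial_fact field_simps)
  also have "\<dots> = appell \<alpha> n x / fact n"
    by (simp add: appell_def sum_divide_distrib)
  finally show ?thesis .
qed

lemma appell_at_0: "appell \<alpha> n 0 = \<alpha> n"
  using appell_eq_fps_nth[of 0 \<alpha> n] by simp

lemma appell_add:
  "appell \<alpha> n (x + y) = (\<Sum>k=0..n. of_nat (n choose k) * y ^ k * appell \<alpha> (n - k) x)"
proof -
  define a where "a = Abs_fps (\<lambda>n. \<alpha> n / fact n)"
  have "fps_exp (x + y) * a = fps_exp y * (fps_exp x * a)"
    by (simp add: fps_exp_add_mult mult.assoc mult.commute)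
  then have "fps_nth (fps_exp (x + y) * a) n = fps_nth (fps_exp y * (fps_exp x * a)) n"
    by (rule arg_cong)
  then have "appell \<alpha> n (x + y) / fact n
      = (\<Sum>i=0..n. y^i / fact i * (appell \<alpha> (n-i) x / fact (n-i)))"
    unfolding fps_mult_nth[of "fps_exp y"] by (simp add: appell_eq_fps_nth a_def)
  also have "\<dots> = (\<Sum>k=0..n. of_nat (n choose k) * y ^ k * appell \<alpha> (n - k) x) / fact n"
    unfolding sum_divide_distrib
    by (intro sum.cong) (auto simp: binomial_fact field_simps)
  finally show ?thesis by simp
qed

lemma appell_star_eq_appell_inverse:
  assumes "x \<noteq> 0"
  shows "appell_star \<alpha> n x = x ^ n * appell \<alpha> n (1 / x)"
proof -
  have "x ^ n * appell \<alpha> n (1 / x)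
      = (\<Sum>\<nu>=0..n. of_nat (n choose (n - \<nu>)) * \<alpha> (n - \<nu>) * x ^ (n - \<nu>))"
    unfolding appell_def sum_distrib_left
    by (intro sum.cong) (auto simp: binomial_symmetric[symmetric] power_one_over
        power_diff[OF assms])
  also have "\<dots> = appell_star \<alpha> n x"
    unfolding appell_star_def
    using sum.atLeastAtMost_rev[of "\<lambda>\<nu>. of_nat (n choose \<nu>) * \<alpha> \<nu> * x ^ \<nu>" 0 n] by simp
  finally show ?thesis ..
qed

lemma neg_one_power_split: "k \<le> n \<Longrightarrow> (-1::complex) ^ n = (-1) ^ k * (-1) ^ (n - k)"
  by (simp add: power_add[symmetric])

lemma prop_R_imp_appell_1: "prop_R \<alpha> \<Longrightarrow> appell \<alpha> n 1 = (-1) ^ n * \<alpha> n"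
  unfolding prop_R_def by (metis appell_at_0 diff_zero)

lemma appell_1_imp_prop_R:
  assumes "\<forall>n. appell \<alpha> n 1 = (-1) ^ n * \<alpha> n"
  shows "prop_R \<alpha>"
  unfolding prop_R_def
proof (intro allI)
  fix n x
  have "appell \<alpha> n (1 - x) = (\<Sum>k=0..n. of_nat (n choose k) * (-x) ^ k * appell \<alpha> (n - k) 1)"
    using appell_add[of \<alpha> n 1 "-x"] by simp
  also have "\<dots> = (\<Sum>k=0..n. (-1)^n * (of_nat (n choose k) * \<alpha> (n - k) * x ^ k))"
    using assms neg_one_power_split
    by (intro sum.cong) (auto simp: power_minus[of x] mult_ac)
  also have "\<dots> = (-1)^n * appell \<alpha> n x"
    by (simp add: appell_def sum_distrib_left)
  finally show "appell \<alpha> n (1 - x) = (-1) ^ n * appell \<alpha> n x" .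
qed

lemma prop_R_imp_appell_half:
  assumes "prop_R \<alpha>" and "odd n"
  shows "appell \<alpha> n (1/2) = 0"
proof -
  have "appell \<alpha> n (1 - 1/2) = (-1)^n * appell \<alpha> n (1/2)"
    using assms(1) unfolding prop_R_def by blast
  then show ?thesis using assms(2) by simp
qed

lemma appell_half_imp_appell_1:
  assumes odd_zero: "\<forall>n. odd n \<longrightarrow> appell \<alpha> n (1/2) = 0"
  shows "appell \<alpha> n 1 = (-1) ^ n * \<alpha> n"
proof -
  \<comment> \<open>Only terms with n - k even survive, and for them (-1)^k = (-1)^n.\<close>
  have term_sign: "(1/2) ^ k * appell \<alpha> (n - k) (1/2)
      = (-1) ^ n * ((-1/2) ^ k * appell \<alpha> (n - k) (1/2))" if "k \<le> n" for k
    using odd_zero neg_one_power_split[OF that]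
    by (cases "even (n - k)") (auto simp: power_minus' power_divide)
  have "appell \<alpha> n 1 = appell \<alpha> n (1/2 + 1/2)" by simp
  also have "\<dots> = (\<Sum>k=0..n. of_nat (n choose k) * (1/2) ^ k * appell \<alpha> (n - k) (1/2))"
    by (rule appell_add)
  also have "\<dots> = (-1)^n * (\<Sum>k=0..n. of_nat (n choose k) * (-1/2) ^ k * appell \<alpha> (n - k) (1/2))"
    unfolding sum_distrib_left
    by (intro sum.cong) (auto simp: term_sign mult_ac)
  also have "\<dots> = (-1)^n * appell \<alpha> n (1/2 + (-1/2))"
    by (simp only: appell_add)
  finally show ?thesis by (simp add: appell_at_0)
qed

theorem mainTheorem1:
  fixes \<alpha> :: "nat \<Rightarrow> complex"
  shows "(prop_R \<alpha> \<longleftrightarrow> (\<forall>n. appell \<alpha> n 1 = (-1) ^ n * \<alpha> n))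
       \<and> (prop_R \<alpha> \<longleftrightarrow> (\<forall>n. odd n \<longrightarrow> appell \<alpha> n (1/2) = 0))
       \<and> (prop_R \<alpha> \<longleftrightarrow> ((\<forall>n. appell_star \<alpha> n 1 = (-1) ^ n * \<alpha> n)
                          \<and> (\<forall>n. odd n \<longrightarrow> appell_star \<alpha> n 2 = 0)))
       \<and> (prop_R \<alpha> \<longrightarrow> \<alpha> 1 = - (1/2) * \<alpha> 0)"
proof -
  have at_1: "prop_R \<alpha> \<longleftrightarrow> (\<forall>n. appell \<alpha> n 1 = (-1) ^ n * \<alpha> n)"
    using prop_R_imp_appell_1 appell_1_imp_prop_R by blast
  have at_half: "prop_R \<alpha> \<longleftrightarrow> (\<forall>n. odd n \<longrightarrow> appell \<alpha> n (1/2) = 0)"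
    using prop_R_imp_appell_half appell_half_imp_appell_1 appell_1_imp_prop_R by blast
  have star_1: "appell_star \<alpha> n 1 = appell \<alpha> n 1" for n
    using appell_star_eq_appell_inverse[of 1 \<alpha> n] by simp
  have star_2: "appell_star \<alpha> n 2 = 2 ^ n * appell \<alpha> n (1/2)" for n
    using appell_star_eq_appell_inverse[of 2 \<alpha> n] by simp
  have "\<alpha> 1 = - (1/2) * \<alpha> 0" if "prop_R \<alpha>"
  proof -
    have "\<alpha> 1 + \<alpha> 0 = - \<alpha> 1"
      using prop_R_imp_appell_1[OF that, of 1] by (simp add: appell_def)
    then show ?thesis by (simp add: field_simps eq_neg_iff_add_eq_0 add.commute)
  qed
  then show ?thesis using at_1 at_half by (simp add: star_1 star_2)
qed

end
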